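(* Let $R$ be a nonzero commutative ring which is not a field, let $n\ge2$, and let $K$ be a field. Then $\mathrm{St}^K_n(R)$ is not irreducible as a $\mathrm{GL}_n(R)$-representation.
   Context: A flag in $R^n$ is a chain $0\subsetneq V_1\subsetneq\cdots\subsetneq V_k\subsetneq R^n$ of free direct summands; complete if $k=n-1$, good if a subflag of a complete flag. The Tits complex $\mathcal{T}_n(R)$ has vertices the direct summands $V$ of $R^n$, $0\ne V\ne R^n$, with $V$ and $R^n/V$ free, and a $k$-simplex for every good flag with $k+1$ terms; $\mathrm{GL}_n(R)$ acts on it simplicially. $\mathrm{St}^K_n(R)=\tilde H_{n-2}(\mathcal{T}_n(R);K)$ with the induced $\mathrm{GL}_n(R)$-action. *)

theory Defs
  imports Main
begin

definition Rn :: "nat \<Rightarrow> (nat \<Rightarrow> 'r::comm_ring_1) set" where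
  "Rn n = {v. \<forall>i\<ge>n. v i = 0}"

definition zvec :: "nat \<Rightarrow> 'r::comm_ring_1" where
  "zvec = (\<lambda>i. 0)"

definition lincomb :: "'r::comm_ring_1 list \<Rightarrow> (nat \<Rightarrow> 'r) list \<Rightarrow> (nat \<Rightarrow> 'r)" where
  "lincomb cs vs = (\<lambda>i. \<Sum>j<length vs. cs ! j * (vs ! j) i)"

definition span_R :: "(nat \<Rightarrow> 'r::comm_ring_1) list \<Rightarrow> (nat \<Rightarrow> 'r) set" where
  "span_R vs = {lincomb cs vs | cs. length cs = length vs}"

definition lin_indep :: "(nat \<Rightarrow> 'r::comm_ring_1) list \<Rightarrow> bool" where
  "lin_indep vs \<longleftrightarrow>
     (\<forall>cs. length cs = length vs \<and> lincomb cs vs = zvec \<longrightarrow> (\<forall>c\<in>set cs. c = 0))"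

definition submod :: "nat \<Rightarrow> (nat \<Rightarrow> 'r::comm_ring_1) set \<Rightarrow> bool" where
  "submod n V \<longleftrightarrow> V \<subseteq> Rn n \<and> zvec \<in> V \<and>
     (\<forall>x\<in>V. \<forall>y\<in>V. (\<lambda>i. x i + y i) \<in> V) \<and> (\<forall>c. \<forall>x\<in>V. (\<lambda>i. c * x i) \<in> V)"

text \<open>Free module (with a basis; free direct summands of R^n are finitely generated,
  so the basis is finite).\<close>
definition free_mod :: "(nat \<Rightarrow> 'r::comm_ring_1) set \<Rightarrow> bool" where
  "free_mod V \<longleftrightarrow> (\<exists>vs. set vs \<subseteq> V \<and> span_R vs = V \<and> lin_indep vs)"

text \<open>R^n / V is free: there are vectors whose images in R^n/V form a basis.\<close>
definition quot_free :: "nat \<Rightarrow> (nat \<Rightarrow> 'r::comm_ring_1) set \<Rightarrow> bool" where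
  "quot_free n V \<longleftrightarrow> (\<exists>ws. set ws \<subseteq> Rn n \<and>
     (\<forall>v\<in>Rn n. \<exists>cs. length cs = length ws \<and> (\<lambda>i. v i - lincomb cs ws i) \<in> V) \<and>
     (\<forall>cs. length cs = length ws \<and> lincomb cs ws \<in> V \<longrightarrow> (\<forall>c\<in>set cs. c = 0)))"

definition direct_summand :: "nat \<Rightarrow> (nat \<Rightarrow> 'r::comm_ring_1) set \<Rightarrow> bool" where
  "direct_summand n V \<longleftrightarrow> submod n V \<and>
     (\<exists>W. submod n W \<and> V \<inter> W = {zvec} \<and>
        (\<forall>x\<in>Rn n. \<exists>v\<in>V. \<exists>w\<in>W. x = (\<lambda>i. v i + w i)))"

definition tits_vertex :: "nat \<Rightarrow> (nat \<Rightarrow> 'r::comm_ring_1) set \<Rightarrow> bool" where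
  "tits_vertex n V \<longleftrightarrow> direct_summand n V \<and> V \<noteq> {zvec} \<and> V \<noteq> Rn n \<and>
     free_mod V \<and> quot_free n V"

definition is_flag :: "nat \<Rightarrow> (nat \<Rightarrow> 'r::comm_ring_1) set list \<Rightarrow> bool" where
  "is_flag n F \<longleftrightarrow> sorted_wrt (\<subset>) F \<and>
     (\<forall>V\<in>set F. direct_summand n V \<and> free_mod V \<and> V \<noteq> {zvec} \<and> V \<noteq> Rn n)"

definition complete_flag :: "nat \<Rightarrow> (nat \<Rightarrow> 'r::comm_ring_1) set list \<Rightarrow> bool" where
  "complete_flag n F \<longleftrightarrow> is_flag n F \<and> length F = n - 1"

definition good_flag :: "nat \<Rightarrow> (nat \<Rightarrow> 'r::comm_ring_1) set list \<Rightarrow> bool" where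
  "good_flag n F \<longleftrightarrow> is_flag n F \<and> (\<exists>G. complete_flag n G \<and> set F \<subseteq> set G)"

text \<open>Simplices of the augmented (ordered) Tits complex: a k-simplex is a good flag with
  k+1 terms (all vertices), written in increasing order; the empty list is the (-1)-simplex
  used for reduced homology.\<close>
definition tits_simplex :: "nat \<Rightarrow> (nat \<Rightarrow> 'r::comm_ring_1) set list \<Rightarrow> bool" where
  "tits_simplex n \<sigma> \<longleftrightarrow> \<sigma> = [] \<or> (good_flag n \<sigma> \<and> (\<forall>V\<in>set \<sigma>. tits_vertex n V))"

text \<open>Simplicial chains with coefficients in K supported on simplices with m vertices
  (i.e. of dimension m-1).\<close>
definition chains :: "nat \<Rightarrow> nat \<Rightarrow> ((nat \<Rightarrow> 'r::comm_ring_1) set list \<Rightarrow> 'k::field) set" where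
  "chains n m = {c. finite {\<sigma>. c \<sigma> \<noteq> 0} \<and>
      (\<forall>\<sigma>. c \<sigma> \<noteq> 0 \<longrightarrow> tits_simplex n \<sigma> \<and> length \<sigma> = m)}"

definition del_nth :: "nat \<Rightarrow> 'a list \<Rightarrow> 'a list" where
  "del_nth i xs = take i xs @ drop (Suc i) xs"

text \<open>Simplicial boundary (on 0-chains it is the augmentation onto the (-1)-simplex []).\<close>
definition bdry :: "((nat \<Rightarrow> 'r::comm_ring_1) set list \<Rightarrow> 'k::field) \<Rightarrow> ((nat \<Rightarrow> 'r) set list \<Rightarrow> 'k)" where
  "bdry c = (\<lambda>\<tau>. \<Sum>\<sigma>\<in>{\<sigma>. c \<sigma> \<noteq> 0}.
       \<Sum>i\<in>{i. i < length \<sigma> \<and> del_nth i \<sigma> = \<tau>}. (- 1) ^ i * c \<sigma>)"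

definition cycles :: "nat \<Rightarrow> nat \<Rightarrow> ((nat \<Rightarrow> 'r::comm_ring_1) set list \<Rightarrow> 'k::field) set" where
  "cycles n m = {c \<in> chains n m. bdry c = (\<lambda>\<tau>. 0)}"

definition boundaries :: "nat \<Rightarrow> nat \<Rightarrow> ((nat \<Rightarrow> 'r::comm_ring_1) set list \<Rightarrow> 'k::field) set" where
  "boundaries n m = bdry ` chains n (Suc m)"

definition in_GL :: "nat \<Rightarrow> (nat \<Rightarrow> nat \<Rightarrow> 'r::comm_ring_1) \<Rightarrow> bool" where
  "in_GL n g \<longleftrightarrow> (\<exists>h.
     (\<forall>i<n. \<forall>j<n. (\<Sum>l<n. g i l * h l j) = (if i = j then 1 else 0)) \<and>
     (\<forall>i<n. \<forall>j<n. (\<Sum>l<n. h i l * g l j) = (if i = j then 1 else 0)))"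

definition mat_act :: "nat \<Rightarrow> (nat \<Rightarrow> nat \<Rightarrow> 'r::comm_ring_1) \<Rightarrow> (nat \<Rightarrow> 'r) \<Rightarrow> (nat \<Rightarrow> 'r)" where
  "mat_act n g v = (\<lambda>i. if i < n then (\<Sum>j<n. g i j * v j) else 0)"

definition chain_act :: "nat \<Rightarrow> (nat \<Rightarrow> nat \<Rightarrow> 'r::comm_ring_1)
    \<Rightarrow> ((nat \<Rightarrow> 'r) set list \<Rightarrow> 'k::field) \<Rightarrow> ((nat \<Rightarrow> 'r) set list \<Rightarrow> 'k)" where
  "chain_act n g c = (\<lambda>\<tau>. \<Sum>\<sigma>\<in>{\<sigma>. c \<sigma> \<noteq> 0 \<and> map (\<lambda>V. mat_act n g ` V) \<sigma> = \<tau>}. c \<sigma>)"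

definition GL_stable_subspace :: "nat \<Rightarrow> ((nat \<Rightarrow> 'r::comm_ring_1) set list \<Rightarrow> 'k::field) set \<Rightarrow> bool" where
  "GL_stable_subspace n W \<longleftrightarrow>
     (\<forall>x\<in>W. \<forall>y\<in>W. (\<lambda>\<sigma>. x \<sigma> + y \<sigma>) \<in> W) \<and>
     (\<forall>a. \<forall>x\<in>W. (\<lambda>\<sigma>. a * x \<sigma>) \<in> W) \<and>
     (\<forall>g. in_GL n g \<longrightarrow> (\<forall>x\<in>W. chain_act n g x \<in> W))"

text \<open>St^K_n(R) = reduced H_{n-2}(T_n(R);K) = Z/B with Z the (n-2)-cycles (chains on
  simplices with n-1 vertices) and B the boundaries. It is irreducible iff it is nonzero
  and its only GL_n(R)-subrepresentations are 0 and itself; subrepresentations of Z/B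
  correspond to GL_n(R)-stable subspaces W with B <= W <= Z.\<close>
definition St_irreducible :: "'r::comm_ring_1 itself \<Rightarrow> 'k::field itself \<Rightarrow> nat \<Rightarrow> bool" where
  "St_irreducible _ _ n \<longleftrightarrow>
     (let Z = (cycles n (n - 1) :: ((nat \<Rightarrow> 'r) set list \<Rightarrow> 'k) set);
          B = (boundaries n (n - 1) :: ((nat \<Rightarrow> 'r) set list \<Rightarrow> 'k) set)
      in B \<noteq> Z \<and>
         (\<forall>W. B \<subseteq> W \<and> W \<subseteq> Z \<and> GL_stable_subspace n W \<longrightarrow> W = B \<or> W = Z))"

end

theory Submission
  imports Defs "HOL-Library.Disjoint_Sets" "HOL-Combinatorics.Permutations"
begin

text \<open>For n \<ge> 2 the Tits complex has no simplices of dimension n - 1, so St_n(R) is the space of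
  top-dimensional cycles. Fix a nonzero non-unit x. Replacing every vertex V by V + xR^n commutes
  with the action of GL_n(R), so the cycles whose reduction modulo x vanishes form a
  subrepresentation. It is proper: the fundamental class of the standard apartment does not
  reduce to zero, since distinct orderings of the coordinates give coordinate flags that stay
  distinct modulo the non-unit x. It is nonzero: the transvection T = I + x e_10 is the identity
  modulo x, so the apartment class minus its T-translate lies in it, and this difference is
  nonzero because T (x \<noteq> 0) moves the first coordinate line off every coordinate flag.\<close>

section \<open>Coordinate submodules\<close>

definition unit_vec :: "nat \<Rightarrow> nat \<Rightarrow> 'r::comm_ring_1" where
  "unit_vec j = (\<lambda>i. if i = j then 1 else 0)"

definition coord_submod :: "nat \<Rightarrow> nat set \<Rightarrow> (nat \<Rightarrow> 'r::comm_ring_1) set" where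
  "coord_submod n A = {v \<in> Rn n. \<forall>i. i \<notin> A \<longrightarrow> v i = 0}"

lemma unit_vec_in_Rn: "j < n \<Longrightarrow> unit_vec j \<in> Rn n"
  by (auto simp: Rn_def unit_vec_def)

lemma lincomb_in_Rn: "set vs \<subseteq> Rn n \<Longrightarrow> lincomb cs vs \<in> Rn n"
  unfolding Rn_def lincomb_def
  by (auto intro!: sum.neutral simp: subset_iff) (use nth_mem in fastforce)

lemma lincomb_unit_vecs_nth:
  assumes "distinct l" "k < length l"
  shows "lincomb cs (map unit_vec l) (l ! k) = (cs ! k :: 'r::comm_ring_1)"
proof -
  have "lincomb cs (map unit_vec l) (l ! k) = (\<Sum>j<length l. if j = k then cs ! k else (0::'r))"
    unfolding lincomb_def using assms
    by (intro sum.cong) (auto simp: unit_vec_def nth_eq_iff_index_eq)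
  then show ?thesis using assms by simp
qed

lemma lincomb_unit_vecs_restrict:
  assumes "distinct l"
  shows "lincomb (map v l) (map unit_vec l) i = (if i \<in> set l then v i else (0 :: 'r::comm_ring_1))"
proof (cases "i \<in> set l")
  case True
  then obtain k where "k < length l" "l ! k = i" by (auto simp: in_set_conv_nth)
  with True lincomb_unit_vecs_nth[OF assms, of k "map v l"] show ?thesis by simp
next
  case False
  then show ?thesis
    unfolding lincomb_def by (auto intro!: sum.neutral simp: unit_vec_def)
qed

lemma lincomb_unit_vecs_coeffs_zero:
  assumes "distinct l" "length cs = length l" "\<forall>k<length l. lincomb cs (map unit_vec l) (l ! k) = 0"
  shows "\<forall>c\<in>set cs. c = (0 :: 'r::comm_ring_1)"
proof
  fix c assume "c \<in> set cs"
  then obtain k where "k < length l" "c = cs ! k" using assms(2) by (auto simp: in_set_conv_nth)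
  then show "c = 0" using assms(3) lincomb_unit_vecs_nth[OF assms(1), of k cs] by simp
qed

lemma coord_submod_mono: "A \<subseteq> B \<Longrightarrow> coord_submod n A \<subseteq> coord_submod n B"
  by (auto simp: coord_submod_def)

lemma unit_vec_in_coord_submod: "j < n \<Longrightarrow> j \<in> A \<Longrightarrow> unit_vec j \<in> coord_submod n A"
  by (auto simp: coord_submod_def unit_vec_in_Rn) (auto simp: unit_vec_def)

lemma unit_vec_notin_coord_submod:
  "(1::'r::comm_ring_1) \<noteq> 0 \<Longrightarrow> j \<notin> A \<Longrightarrow> (unit_vec j :: nat \<Rightarrow> 'r) \<notin> coord_submod n A"
  by (auto simp: coord_submod_def unit_vec_def)

lemma coord_submod_strict_mono:
  assumes "(1::'r::comm_ring_1) \<noteq> 0" "A \<subset> B" "B \<subseteq> {..<n}"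
  shows "(coord_submod n A :: (nat \<Rightarrow> 'r) set) \<subset> coord_submod n B"
proof -
  obtain j where "j \<in> B" "j \<notin> A" using assms by blast
  then show ?thesis
    using assms coord_submod_mono[of A B n] unit_vec_in_coord_submod[of j n B]
      unit_vec_notin_coord_submod[of j A n] by blast
qed

lemma submod_coord_submod: "submod n (coord_submod n A)"
  by (auto simp: submod_def coord_submod_def Rn_def zvec_def)

lemma free_mod_coord_submod:
  assumes "A \<subseteq> {..<n}"
  shows "free_mod (coord_submod n A :: (nat \<Rightarrow> 'r::comm_ring_1) set)"
proof -
  define l where "l = sorted_list_of_set A"
  have "finite A" using assms finite_subset by blast
  then have l: "distinct l" "set l = A" by (auto simp: l_def)
  define vs :: "(nat \<Rightarrow> 'r) list" where "vs = map unit_vec l"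
  have "set vs \<subseteq> coord_submod n A"
    using l assms by (auto simp: vs_def intro!: unit_vec_in_coord_submod)
  moreover have "span_R vs = coord_submod n A"
  proof
    show "span_R vs \<subseteq> coord_submod n A"
    proof
      fix u :: "nat \<Rightarrow> 'r" assume "u \<in> span_R vs"
      then obtain cs where u: "u = lincomb cs vs" by (auto simp: span_R_def)
      have "u \<in> Rn n" unfolding u
        by (rule lincomb_in_Rn) (use l assms in \<open>auto simp: vs_def unit_vec_in_Rn\<close>)
      moreover have "u i = 0" if "i \<notin> A" for i
        using that l unfolding u vs_def lincomb_def by (auto intro!: sum.neutral simp: unit_vec_def)
      ultimately show "u \<in> coord_submod n A" by (simp add: coord_submod_def)
    qed
    show "coord_submod n A \<subseteq> span_R vs"
    proof
      fix u :: "nat \<Rightarrow> 'r" assume "u \<in> coord_submod n A"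
      then have "lincomb (map u l) vs = u"
        using l by (auto simp: fun_eq_iff vs_def lincomb_unit_vecs_restrict coord_submod_def)
      then show "u \<in> span_R vs"
        unfolding span_R_def vs_def by (metis (mono_tags, lifting) length_map mem_Collect_eq)
    qed
  qed
  moreover have "lin_indep vs"
    unfolding lin_indep_def vs_def zvec_def
    by (metis length_map lincomb_unit_vecs_coeffs_zero[OF l(1)])
  ultimately show ?thesis unfolding free_mod_def by blast
qed

lemma quot_free_coord_submod:
  assumes "A \<subseteq> {..<n}"
  shows "quot_free n (coord_submod n A :: (nat \<Rightarrow> 'r::comm_ring_1) set)"
proof -
  define l where "l = sorted_list_of_set ({..<n} - A)"
  have l: "distinct l" "set l = {..<n} - A" by (auto simp: l_def)
  define ws :: "(nat \<Rightarrow> 'r) list" where "ws = map unit_vec l"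
  have "set ws \<subseteq> Rn n"
    using l by (auto simp: ws_def intro!: unit_vec_in_Rn)
  moreover have "\<exists>cs. length cs = length ws \<and> (\<lambda>i. v i - lincomb cs ws i) \<in> coord_submod n A"
    if "v \<in> Rn n" for v
    using that l
    by (intro exI[of _ "map v l"]) (auto simp: ws_def coord_submod_def Rn_def lincomb_unit_vecs_restrict)
  moreover have "\<forall>c\<in>set cs. c = 0" if "length cs = length ws" "lincomb cs ws \<in> coord_submod n A" for cs
  proof (rule lincomb_unit_vecs_coeffs_zero[OF l(1)])
    show "\<forall>k<length l. lincomb cs (map unit_vec l) (l ! k) = 0"
      using that l nth_mem[of _ l] by (auto simp: ws_def coord_submod_def)
  qed (use that in \<open>simp add: ws_def\<close>)
  ultimately show ?thesis unfolding quot_free_def by blast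
qed

lemma direct_summand_coord_submod:
  assumes "A \<subseteq> {..<n}"
  shows "direct_summand n (coord_submod n A :: (nat \<Rightarrow> 'r::comm_ring_1) set)"
proof -
  let ?C = "coord_submod n ({..<n} - A) :: (nat \<Rightarrow> 'r) set"
  have "coord_submod n A \<inter> ?C = {zvec}"
  proof (intro equalityI subsetI)
    fix u :: "nat \<Rightarrow> 'r" assume u: "u \<in> coord_submod n A \<inter> ?C"
    have "u i = 0" for i
      using u by (cases "i < n") (auto simp: coord_submod_def Rn_def)
    then show "u \<in> {zvec}" by (simp add: zvec_def fun_eq_iff)
  qed (auto simp: coord_submod_def Rn_def zvec_def)
  moreover have "\<exists>v\<in>coord_submod n A. \<exists>w\<in>?C. x = (\<lambda>i. v i + w i)" if "x \<in> Rn n" for x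
    using that
    by (intro bexI[of _ "\<lambda>i. if i \<in> A then x i else 0"] bexI[of _ "\<lambda>i. if i \<in> A then 0 else x i"])
       (auto simp: coord_submod_def Rn_def)
  ultimately show ?thesis
    unfolding direct_summand_def using submod_coord_submod by blast
qed

lemma tits_vertex_coord_submod:
  assumes "(1::'r::comm_ring_1) \<noteq> 0" "A \<subseteq> {..<n}" "A \<noteq> {}" "A \<noteq> {..<n}"
  shows "tits_vertex n (coord_submod n A :: (nat \<Rightarrow> 'r) set)"
proof -
  obtain j where j: "j \<in> A" using assms by blast
  obtain j' where j': "j' < n" "j' \<notin> A" using assms by blast
  have "(unit_vec j :: nat \<Rightarrow> 'r) \<in> coord_submod n A"
    using j assms by (auto intro!: unit_vec_in_coord_submod)
  moreover have "(unit_vec j :: nat \<Rightarrow> 'r) \<noteq> zvec"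
    using assms(1) by (auto simp: unit_vec_def zvec_def fun_eq_iff)
  ultimately have "coord_submod n A \<noteq> ({zvec} :: (nat \<Rightarrow> 'r) set)" by blast
  moreover have "coord_submod n A \<noteq> (Rn n :: (nat \<Rightarrow> 'r) set)"
    using unit_vec_in_Rn[OF j'(1)] unit_vec_notin_coord_submod[OF assms(1) j'(2)] by metis
  ultimately show ?thesis
    unfolding tits_vertex_def using direct_summand_coord_submod[OF assms(2)]
      free_mod_coord_submod[OF assms(2)] quot_free_coord_submod[OF assms(2)] by blast
qed

section \<open>The standard apartment\<close>

definition perm_flag :: "nat \<Rightarrow> (nat \<Rightarrow> nat) \<Rightarrow> (nat \<Rightarrow> 'r::comm_ring_1) set list" where
  "perm_flag n p = map (\<lambda>k. coord_submod n (p ` {..k})) [0..<n - 1]"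

lemma length_perm_flag [simp]: "length (perm_flag n p) = n - 1"
  by (simp add: perm_flag_def)

lemma permutes_image_atMost_subset:
  "(p :: nat \<Rightarrow> nat) permutes {..<n} \<Longrightarrow> k < n \<Longrightarrow> p ` {..k} \<subseteq> {..<n}"
  using permutes_in_image[of p "{..<n}"] by fastforce

lemma permutes_image_atMost_psubset:
  fixes p :: "nat \<Rightarrow> nat"
  assumes "p permutes {..<n}" "k < l"
  shows "p ` {..k} \<subset> p ` {..l}"
proof -
  have "p l \<notin> p ` {..k}"
  proof
    assume "p l \<in> p ` {..k}"
    then obtain m where "m \<le> k" "p m = p l" by auto
    then show False using injD[OF permutes_inj[OF assms(1)]] assms(2) by fastforce
  qed
  then show ?thesis using assms(2) by fastforce
qed

lemma card_permutes_image_atMost: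
  assumes "(p :: nat \<Rightarrow> nat) permutes {..<n}"
  shows "card (p ` {..k}) = Suc k"
  using permutes_inj[OF assms] by (simp add: card_image inj_on_subset)

lemma perm_flag_nth: "k < n - 1 \<Longrightarrow> perm_flag n p ! k = coord_submod n (p ` {..k})"
  by (simp add: perm_flag_def)

lemma tits_simplex_perm_flag:
  assumes one: "(1::'r::comm_ring_1) \<noteq> 0" and p: "p permutes {..<n}"
  shows "tits_simplex n (perm_flag n p :: (nat \<Rightarrow> 'r) set list)"
proof -
  let ?F = "perm_flag n p :: (nat \<Rightarrow> 'r) set list"
  have vertex: "tits_vertex n V" if "V \<in> set ?F" for V
  proof -
    obtain k where k: "k < n - 1" "V = coord_submod n (p ` {..k})"
      using \<open>V \<in> set ?F\<close> by (auto simp: perm_flag_def)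
    have "p ` {..k} \<noteq> {..<n}" using card_permutes_image_atMost[OF p, of k] k by auto
    then show ?thesis
      unfolding k(2) using k(1) permutes_image_atMost_subset[OF p]
      by (intro tits_vertex_coord_submod[OF one]) auto
  qed
  have "sorted_wrt (\<subset>) ?F"
    unfolding sorted_wrt_iff_nth_less
  proof (intro allI impI)
    fix i j assume "i < j" "j < length ?F"
    then show "?F ! i \<subset> ?F ! j"
      using coord_submod_strict_mono[OF one permutes_image_atMost_psubset[OF p \<open>i < j\<close>]
          permutes_image_atMost_subset[OF p, of j]]
      by (simp add: perm_flag_nth)
  qed
  then have "is_flag n ?F"
    unfolding is_flag_def using vertex by (auto simp: tits_vertex_def)
  then have "good_flag n ?F"
    unfolding good_flag_def complete_flag_def by auto
  then show ?thesis unfolding tits_simplex_def using vertex by blast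
qed

definition apartment_chain :: "nat \<Rightarrow> (nat \<Rightarrow> 'r::comm_ring_1) set list \<Rightarrow> 'k::field" where
  "apartment_chain n \<sigma> = (\<Sum>p | p permutes {..<n} \<and> perm_flag n p = \<sigma>. of_int (sign p))"

lemma apartment_chain_support:
  "{\<sigma>. (apartment_chain n \<sigma> :: 'k::field) \<noteq> 0} \<subseteq> perm_flag n ` {p. p permutes {..<n}}"
proof
  fix \<sigma> assume \<sigma>: "\<sigma> \<in> {\<sigma>. (apartment_chain n \<sigma> :: 'k) \<noteq> 0}"
  have "{p. p permutes {..<n} \<and> perm_flag n p = \<sigma>} \<noteq> {}"
  proof
    assume "{p. p permutes {..<n} \<and> perm_flag n p = \<sigma>} = {}"
    then have "(apartment_chain n \<sigma> :: 'k) = 0" unfolding apartment_chain_def by (simp only: sum.empty)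
    with \<sigma> show False by simp
  qed
  then show "\<sigma> \<in> perm_flag n ` {p. p permutes {..<n}}" by blast
qed

lemma finite_apartment_chain_support:
  "finite {\<sigma>. (apartment_chain n \<sigma> :: 'k::field) \<noteq> 0}"
  by (rule finite_subset[OF apartment_chain_support]) (simp add: finite_permutations)

lemma del_nth_cong:
  assumes "length xs = length ys" "\<And>k. k < length xs \<Longrightarrow> k \<noteq> i \<Longrightarrow> xs ! k = ys ! k"
  shows "del_nth i xs = del_nth i ys"
proof -
  have "take i xs = take i ys" "drop (Suc i) xs = drop (Suc i) ys"
    by (auto intro!: nth_equalityI simp: assms)
  then show ?thesis by (simp add: del_nth_def)
qed

lemma transpose_Suc_image_atMost:
  assumes "k \<noteq> i"
  shows "transpose i (Suc i) ` {..k} = {..k :: nat}"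
proof (cases "k < i")
  case True
  then show ?thesis by (auto simp: transpose_def image_iff)
next
  case False
  then have "transpose i (Suc i) permutes {..k}" using assms by (intro permutes_swap_id) auto
  then show ?thesis by (rule permutes_image)
qed

lemma image_comp_transpose_Suc_atMost:
  "k \<noteq> i \<Longrightarrow> (\<lambda>x. p (transpose i (Suc i) x)) ` {..k} = p ` {..k :: nat}"
  using image_image[of p "transpose i (Suc i)" "{..k}"] transpose_Suc_image_atMost[of k i] by simp

lemma del_nth_perm_flag_transpose:
  "del_nth i (perm_flag n (p \<circ> transpose i (Suc i))) = del_nth i (perm_flag n p)"
  by (rule del_nth_cong) (auto simp: perm_flag_def image_comp_transpose_Suc_atMost)

lemma sign_compose_transpose_Suc:
  "p permutes {..<n} \<Longrightarrow> sign (p \<circ> transpose i (Suc i)) = - sign p"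
  using sign_compose[OF permutation_permutes[THEN iffD2] permutation_swap_id, of p i "Suc i"]
  by (auto simp: sign_swap_id)

lemma bdry_apartment_chain_eq_sum:
  "bdry (apartment_chain n :: (nat \<Rightarrow> 'r::comm_ring_1) set list \<Rightarrow> 'k::field) \<tau> =
     (\<Sum>(p, i) \<in> Sigma {p. p permutes {..<n}} (\<lambda>p. {i. i < n - 1 \<and> del_nth i (perm_flag n p) = \<tau>}).
        (- 1) ^ i * of_int (sign p))"
proof -
  let ?P = "{p. p permutes {..<n}}"
  let ?I = "\<lambda>\<sigma> :: (nat \<Rightarrow> 'r) set list. {i. i < length \<sigma> \<and> del_nth i \<sigma> = \<tau>}"
  let ?f = "\<lambda>p i. (- 1) ^ i * (of_int (sign p) :: 'k)"
  let ?F = "perm_flag n :: _ \<Rightarrow> (nat \<Rightarrow> 'r) set list"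
  have finP: "finite ?P" by (simp add: finite_permutations)
  have "bdry (apartment_chain n :: _ \<Rightarrow> 'k) \<tau> =
      (\<Sum>\<sigma>\<in>?F ` ?P. \<Sum>i\<in>?I \<sigma>. (- 1) ^ i * (apartment_chain n \<sigma> :: 'k))"
    unfolding bdry_def using apartment_chain_support finP by (intro sum.mono_neutral_left) auto
  also have "\<dots> = (\<Sum>\<sigma>\<in>?F ` ?P. \<Sum>p | p \<in> ?P \<and> ?F p = \<sigma>. \<Sum>i\<in>?I \<sigma>. ?f p i)"
    by (intro sum.cong refl)
       (auto simp: apartment_chain_def sum_distrib_left intro: sum.swap)
  also have "\<dots> = (\<Sum>\<sigma>\<in>?F ` ?P. \<Sum>p | p \<in> ?P \<and> ?F p = \<sigma>. \<Sum>i\<in>?I (?F p). ?f p i)"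
    by (rule sum.cong[OF refl], rule sum.cong[OF refl]) auto
  also have "\<dots> = (\<Sum>p\<in>?P. \<Sum>i\<in>?I (?F p). ?f p i)"
    by (rule sum.image_gen[symmetric]) (rule finP)
  also have "\<dots> = (\<Sum>(p, i) \<in> Sigma ?P (\<lambda>p. ?I (?F p)). ?f p i)"
    by (subst sum.Sigma) (auto simp: finP)
  finally show ?thesis by simp
qed

text \<open>The i-th faces of the flags of p and of p \<circ> (i i+1) coincide and carry opposite signs,
  so all faces cancel in pairs.\<close>
lemma bdry_apartment_chain:
  "bdry (apartment_chain n :: (nat \<Rightarrow> 'r::comm_ring_1) set list \<Rightarrow> 'k::field) = (\<lambda>\<tau>. 0)"
proof
  fix \<tau> :: "(nat \<Rightarrow> 'r) set list"
  let ?X = "Sigma {p. p permutes {..<n}} (\<lambda>p. {i. i < n - 1 \<and> del_nth i (perm_flag n p :: (nat \<Rightarrow> 'r) set list) = \<tau>})"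
  let ?h = "\<lambda>(p, i). (p \<circ> transpose i (Suc i), i :: nat)"
  let ?f = "\<lambda>(p, i). (- 1) ^ i * (of_int (sign p) :: 'k)"
  have "(\<Sum>x\<in>?X. ?f x) = 0"
  proof (rule sum_involution_eq_0[where h = ?h])
    fix x assume "x \<in> ?X"
    then obtain p i where x: "x = (p, i)" and p: "p permutes {..<n}" and i: "i < n - 1"
      and \<tau>: "del_nth i (perm_flag n p) = \<tau>" by auto
    have "p \<circ> transpose i (Suc i) permutes {..<n}"
      using p i by (intro permutes_compose permutes_swap_id) auto
    then show "?h x \<in> ?X" using x i \<tau> by (simp add: del_nth_perm_flag_transpose)
    show "?h (?h x) = x" by (simp add: x comp_assoc)
    have "p (Suc i) \<noteq> p i" using injD[OF permutes_inj[OF p]] by fastforce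
    then have "p \<circ> transpose i (Suc i) \<noteq> p" by (metis comp_apply transpose_apply_second)
    then show "?h x \<noteq> x" by (simp add: x)
    show "?f (?h x) + ?f x = 0" by (simp add: x sign_compose_transpose_Suc[OF p])
  qed
  then show "bdry (apartment_chain n :: _ \<Rightarrow> 'k) \<tau> = 0"
    by (simp only: bdry_apartment_chain_eq_sum)
qed

lemma apartment_chain_cycle:
  assumes "(1::'r::comm_ring_1) \<noteq> 0"
  shows "(apartment_chain n :: (nat \<Rightarrow> 'r) set list \<Rightarrow> 'k::field) \<in> cycles n (n - 1)"
  using finite_apartment_chain_support apartment_chain_support tits_simplex_perm_flag[OF assms]
  by (fastforce simp: cycles_def chains_def bdry_apartment_chain)

section \<open>Push-forward of chains\<close>

lemma sum_support_eq:
  assumes "finite T" "{\<sigma>. c \<sigma> \<noteq> 0} \<subseteq> T" "\<And>\<sigma>. G \<sigma> 0 = 0"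
  shows "(\<Sum>\<sigma> | c \<sigma> \<noteq> 0. G \<sigma> (c \<sigma>)) = (\<Sum>\<sigma>\<in>T. G \<sigma> (c \<sigma>))"
  using assms by (intro sum.mono_neutral_left) auto

lemma sum_support_add:
  fixes G :: "'a \<Rightarrow> 'k \<Rightarrow> 'k::ab_group_add"
  assumes c: "finite {\<sigma>. c \<sigma> \<noteq> 0}" and d: "finite {\<sigma>. d \<sigma> \<noteq> 0}"
    and G: "\<And>\<sigma> a b. G \<sigma> (a + b) = G \<sigma> a + G \<sigma> b"
  shows "(\<Sum>\<sigma> | c \<sigma> + d \<sigma> \<noteq> 0. G \<sigma> (c \<sigma> + d \<sigma>)) =
    (\<Sum>\<sigma> | c \<sigma> \<noteq> 0. G \<sigma> (c \<sigma>)) + (\<Sum>\<sigma> | d \<sigma> \<noteq> 0. G \<sigma> (d \<sigma>))"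
proof -
  have G0: "G \<sigma> 0 = 0" for \<sigma> using G[of \<sigma> 0 0] by simp
  define T where "T = {\<sigma>. c \<sigma> \<noteq> 0} \<union> {\<sigma>. d \<sigma> \<noteq> 0}"
  have T: "finite T" using c d by (simp add: T_def)
  have sub: "{\<sigma>. c \<sigma> + d \<sigma> \<noteq> 0} \<subseteq> T" "{\<sigma>. c \<sigma> \<noteq> 0} \<subseteq> T" "{\<sigma>. d \<sigma> \<noteq> 0} \<subseteq> T"
    by (auto simp: T_def)
  have "(\<Sum>\<sigma> | c \<sigma> + d \<sigma> \<noteq> 0. G \<sigma> (c \<sigma> + d \<sigma>)) = (\<Sum>\<sigma>\<in>T. G \<sigma> (c \<sigma> + d \<sigma>))"
    by (rule sum_support_eq[where G = G, OF T sub(1) G0])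
  also have "\<dots> = (\<Sum>\<sigma>\<in>T. G \<sigma> (c \<sigma>)) + (\<Sum>\<sigma>\<in>T. G \<sigma> (d \<sigma>))"
    by (simp add: G sum.distrib)
  finally show ?thesis
    using sum_support_eq[where G = G, OF T sub(2) G0] sum_support_eq[where G = G, OF T sub(3) G0]
    by simp
qed

lemma sum_support_smult:
  fixes G :: "'a \<Rightarrow> 'k \<Rightarrow> 'k::ring"
  assumes c: "finite {\<sigma>. c \<sigma> \<noteq> 0}" and G: "\<And>\<sigma> a b. G \<sigma> (a * b) = a * G \<sigma> b"
  shows "(\<Sum>\<sigma> | a * c \<sigma> \<noteq> 0. G \<sigma> (a * c \<sigma>)) = a * (\<Sum>\<sigma> | c \<sigma> \<noteq> 0. G \<sigma> (c \<sigma>))"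
proof -
  have G0: "G \<sigma> 0 = 0" for \<sigma> using G[of \<sigma> 0 0] by simp
  have "{\<sigma>. a * c \<sigma> \<noteq> 0} \<subseteq> {\<sigma>. c \<sigma> \<noteq> 0}" by auto
  then have "(\<Sum>\<sigma> | a * c \<sigma> \<noteq> 0. G \<sigma> (a * c \<sigma>)) = (\<Sum>\<sigma> | c \<sigma> \<noteq> 0. G \<sigma> (a * c \<sigma>))"
    by (rule sum_support_eq[where G = G, OF c _ G0])
  then show ?thesis by (simp add: G sum_distrib_left)
qed

definition push_chain :: "('a \<Rightarrow> 'b) \<Rightarrow> ('a \<Rightarrow> 'k::comm_monoid_add) \<Rightarrow> 'b \<Rightarrow> 'k" where
  "push_chain F c = (\<lambda>\<tau>. \<Sum>\<sigma> | c \<sigma> \<noteq> 0 \<and> F \<sigma> = \<tau>. c \<sigma>)"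

lemma push_chain_eq_sum_support:
  "finite {\<sigma>. c \<sigma> \<noteq> 0} \<Longrightarrow> push_chain F c \<tau> = (\<Sum>\<sigma> | c \<sigma> \<noteq> 0. if F \<sigma> = \<tau> then c \<sigma> else 0)"
  by (simp add: push_chain_def sum.inter_filter[symmetric])

lemma push_chain_support_subset: "{\<tau>. push_chain F c \<tau> \<noteq> 0} \<subseteq> F ` {\<sigma>. c \<sigma> \<noteq> 0}"
proof
  fix \<tau> assume \<tau>: "\<tau> \<in> {\<tau>. push_chain F c \<tau> \<noteq> 0}"
  have "{\<sigma>. c \<sigma> \<noteq> 0 \<and> F \<sigma> = \<tau>} \<noteq> {}"
  proof
    assume "{\<sigma>. c \<sigma> \<noteq> 0 \<and> F \<sigma> = \<tau>} = {}"
    then have "push_chain F c \<tau> = 0" unfolding push_chain_def by (simp only: sum.empty)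
    with \<tau> show False by simp
  qed
  then show "\<tau> \<in> F ` {\<sigma>. c \<sigma> \<noteq> 0}" by blast
qed

lemma push_chain_zero: "push_chain F (\<lambda>\<sigma>. 0) = (\<lambda>\<tau>. 0)"
  by (simp add: push_chain_def)

lemma push_chain_cong: "(\<And>\<sigma>. c \<sigma> \<noteq> 0 \<Longrightarrow> F \<sigma> = G \<sigma>) \<Longrightarrow> push_chain F c = push_chain G c"
  unfolding push_chain_def by (intro ext sum.cong) auto

lemma push_chain_add:
  fixes c d :: "'a \<Rightarrow> 'k::ab_group_add"
  assumes "finite {\<sigma>. c \<sigma> \<noteq> 0}" "finite {\<sigma>. d \<sigma> \<noteq> 0}"
  shows "push_chain F (\<lambda>\<sigma>. c \<sigma> + d \<sigma>) \<tau> = push_chain F c \<tau> + push_chain F d \<tau>"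
proof -
  have "finite {\<sigma>. c \<sigma> + d \<sigma> \<noteq> 0}"
    using assms by (rule finite_subset[rotated, OF finite_UnI]) auto
  moreover have "(\<Sum>\<sigma> | c \<sigma> + d \<sigma> \<noteq> 0. if F \<sigma> = \<tau> then c \<sigma> + d \<sigma> else 0) =
      (\<Sum>\<sigma> | c \<sigma> \<noteq> 0. if F \<sigma> = \<tau> then c \<sigma> else 0) + (\<Sum>\<sigma> | d \<sigma> \<noteq> 0. if F \<sigma> = \<tau> then d \<sigma> else 0)"
    by (rule sum_support_add[OF assms, where G = "\<lambda>\<sigma> v. if F \<sigma> = \<tau> then v else 0"]) simp
  ultimately show ?thesis
    using assms by (simp only: push_chain_eq_sum_support)
qed

lemma push_chain_smult:
  fixes c :: "'a \<Rightarrow> 'k::ring"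
  assumes "finite {\<sigma>. c \<sigma> \<noteq> 0}"
  shows "push_chain F (\<lambda>\<sigma>. a * c \<sigma>) \<tau> = a * push_chain F c \<tau>"
proof -
  have "finite {\<sigma>. a * c \<sigma> \<noteq> 0}"
    using assms by (rule finite_subset[rotated]) auto
  moreover have "(\<Sum>\<sigma> | a * c \<sigma> \<noteq> 0. if F \<sigma> = \<tau> then a * c \<sigma> else 0) =
      a * (\<Sum>\<sigma> | c \<sigma> \<noteq> 0. if F \<sigma> = \<tau> then c \<sigma> else 0)"
    by (rule sum_support_smult[OF assms, where G = "\<lambda>\<sigma> v. if F \<sigma> = \<tau> then v else 0"]) simp
  ultimately show ?thesis
    using assms by (simp only: push_chain_eq_sum_support)
qed

lemma push_chain_diff:
  fixes c d :: "'a \<Rightarrow> 'k::ring_1"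
  assumes "finite {\<sigma>. c \<sigma> \<noteq> 0}" "finite {\<sigma>. d \<sigma> \<noteq> 0}"
  shows "push_chain F (\<lambda>\<sigma>. c \<sigma> - d \<sigma>) \<tau> = push_chain F c \<tau> - push_chain F d \<tau>"
proof -
  have "finite {\<sigma>. (- 1) * d \<sigma> \<noteq> 0}"
    using assms(2) by (rule finite_subset[rotated]) auto
  then show ?thesis
    using push_chain_add[OF assms(1), of "\<lambda>\<sigma>. (- 1) * d \<sigma>" F \<tau>] push_chain_smult[OF assms(2), of F "- 1" \<tau>]
    by simp
qed

lemma push_chain_comp:
  assumes fin: "finite {\<sigma>. c \<sigma> \<noteq> 0}"
  shows "push_chain F (push_chain G c) = push_chain (F \<circ> G) c"
proof
  fix \<rho>
  let ?S = "{\<sigma>. c \<sigma> \<noteq> 0}"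
  have "push_chain F (push_chain G c) \<rho> = (\<Sum>\<tau> | push_chain G c \<tau> \<noteq> 0 \<and> F \<tau> = \<rho>. push_chain G c \<tau>)"
    by (simp only: push_chain_def[of F])
  also have "\<dots> = (\<Sum>\<tau> \<in> {\<tau> \<in> G ` ?S. F \<tau> = \<rho>}. push_chain G c \<tau>)"
    using push_chain_support_subset[of G c] fin by (intro sum.mono_neutral_left) auto
  also have "\<dots> = (\<Sum>\<tau>\<in>G ` ?S. if F \<tau> = \<rho> then push_chain G c \<tau> else 0)"
    using fin by (simp add: sum.inter_filter)
  also have "\<dots> = (\<Sum>\<tau>\<in>G ` ?S. \<Sum>\<sigma> | \<sigma> \<in> ?S \<and> G \<sigma> = \<tau>. if F (G \<sigma>) = \<rho> then c \<sigma> else 0)"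
    by (intro sum.cong refl) (auto simp: push_chain_def)
  also have "\<dots> = (\<Sum>\<sigma>\<in>?S. if F (G \<sigma>) = \<rho> then c \<sigma> else 0)"
    by (rule sum.image_gen[symmetric]) (rule fin)
  also have "\<dots> = push_chain (F \<circ> G) c \<rho>"
    using fin by (simp add: push_chain_eq_sum_support)
  finally show "push_chain F (push_chain G c) \<rho> = push_chain (F \<circ> G) c \<rho>" .
qed

definition all_in_Rn :: "nat \<Rightarrow> (nat \<Rightarrow> 'r::comm_ring_1) set list \<Rightarrow> bool" where
  "all_in_Rn n \<sigma> \<longleftrightarrow> (\<forall>V\<in>set \<sigma>. V \<subseteq> Rn n)"

lemma chain_act_eq_push_chain: "chain_act n g = push_chain (map ((`) (mat_act n g)))"
  unfolding chain_act_def push_chain_def by (rule refl)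

lemma del_nth_map: "del_nth i (map f xs) = map f (del_nth i xs)"
  by (simp add: del_nth_def take_map drop_map)

lemma all_in_Rn_del_nth: "all_in_Rn n \<sigma> \<Longrightarrow> all_in_Rn n (del_nth i \<sigma>)"
  unfolding all_in_Rn_def del_nth_def by (auto dest: in_set_dropD in_set_takeD)

lemma tits_vertex_subset_Rn: "tits_vertex n V \<Longrightarrow> V \<subseteq> Rn n"
  by (simp add: tits_vertex_def direct_summand_def submod_def)

lemma all_in_Rn_tits_simplex: "tits_simplex n \<sigma> \<Longrightarrow> all_in_Rn n \<sigma>"
  unfolding all_in_Rn_def tits_simplex_def using tits_vertex_subset_Rn by fastforce

lemma all_in_Rn_chain_support: "c \<in> chains n m \<Longrightarrow> c \<sigma> \<noteq> 0 \<Longrightarrow> all_in_Rn n \<sigma>"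
  unfolding chains_def using all_in_Rn_tits_simplex by blast

lemma finite_chain_support: "c \<in> chains n m \<Longrightarrow> finite {\<sigma>. c \<sigma> \<noteq> 0}"
  by (simp add: chains_def)

lemma chains_add:
  assumes "c \<in> chains n m" "d \<in> chains n m"
  shows "(\<lambda>\<sigma>. c \<sigma> + d \<sigma>) \<in> chains n m"
proof -
  have "{\<sigma>. c \<sigma> + d \<sigma> \<noteq> 0} \<subseteq> {\<sigma>. c \<sigma> \<noteq> 0} \<union> {\<sigma>. d \<sigma> \<noteq> 0}" by auto
  then show ?thesis
    using assms unfolding chains_def by (auto intro: finite_subset)
qed

lemma chains_smult: "c \<in> chains n m \<Longrightarrow> (\<lambda>\<sigma>. a * c \<sigma>) \<in> chains n m"
  unfolding chains_def by (auto intro: finite_subset[of "{\<sigma>. a * c \<sigma> \<noteq> 0}" "{\<sigma>. c \<sigma> \<noteq> 0}"])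

lemma bdry_add:
  "c \<in> chains n m \<Longrightarrow> d \<in> chains n m \<Longrightarrow> bdry (\<lambda>\<sigma>. c \<sigma> + d \<sigma>) \<tau> = bdry c \<tau> + bdry d \<tau>"
  unfolding bdry_def
  by (rule sum_support_add[OF finite_chain_support finite_chain_support])
     (simp_all add: distrib_left sum.distrib)

lemma bdry_smult: "c \<in> chains n m \<Longrightarrow> bdry (\<lambda>\<sigma>. a * c \<sigma>) \<tau> = a * bdry c \<tau>"
  unfolding bdry_def
  by (rule sum_support_smult[OF finite_chain_support]) (simp_all add: sum_distrib_left mult.left_commute)

lemma cycles_add: "c \<in> cycles n m \<Longrightarrow> d \<in> cycles n m \<Longrightarrow> (\<lambda>\<sigma>. c \<sigma> + d \<sigma>) \<in> cycles n m"
  unfolding cycles_def by (auto simp: chains_add bdry_add)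

lemma cycles_smult: "c \<in> cycles n m \<Longrightarrow> (\<lambda>\<sigma>. a * c \<sigma>) \<in> cycles n m"
  unfolding cycles_def by (auto simp: chains_smult bdry_smult)

lemma cycles_diff: "c \<in> cycles n m \<Longrightarrow> d \<in> cycles n m \<Longrightarrow> (\<lambda>\<sigma>. c \<sigma> - d \<sigma>) \<in> cycles n m"
  using cycles_add[of c n m "\<lambda>\<sigma>. (- 1) * d \<sigma>"] cycles_smult[of d n m "- 1"] by simp

lemma zero_in_cycles: "(\<lambda>\<sigma>. 0) \<in> cycles n m"
  by (simp add: cycles_def chains_def bdry_def)

lemma no_tits_simplex_of_length:
  assumes "tits_simplex n \<sigma>" "\<sigma> \<noteq> []"
  shows "length \<sigma> < n"
proof -
  obtain G where G: "complete_flag n G" "set \<sigma> \<subseteq> set G" and F: "is_flag n \<sigma>"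
    using assms unfolding tits_simplex_def good_flag_def by blast
  have "distinct \<sigma>"
    using F unfolding is_flag_def by (induction \<sigma>) auto
  then have "length \<sigma> = card (set \<sigma>)" by (simp add: distinct_card)
  also have "\<dots> \<le> card (set G)" using G(2) by (simp add: card_mono)
  also have "\<dots> \<le> n - 1" using G(1) card_length[of G] by (simp add: complete_flag_def)
  finally show ?thesis using assms(2) by (cases \<sigma>) auto
qed

lemma boundaries_top:
  assumes "n \<ge> 1"
  shows "(boundaries n (n - 1) :: ((nat \<Rightarrow> 'r::comm_ring_1) set list \<Rightarrow> 'k::field) set) = {\<lambda>\<tau>. 0}"
proof -
  have "c = (\<lambda>\<sigma>. 0)" if "c \<in> chains n n" for c :: "(nat \<Rightarrow> 'r) set list \<Rightarrow> 'k"
    using that assms no_tits_simplex_of_length by (fastforce simp: chains_def)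
  moreover have "(\<lambda>\<sigma>. 0 :: 'k) \<in> chains n n" by (simp add: chains_def)
  ultimately have "(chains n n :: ((nat \<Rightarrow> 'r) set list \<Rightarrow> 'k) set) = {\<lambda>\<sigma>. 0}" by blast
  then show ?thesis
    using assms by (simp add: boundaries_def bdry_def)
qed

section \<open>Linear automorphisms of R^n\<close>

text \<open>The inverse \<psi> is only required to invert \<phi> on R^n.\<close>
locale linear_auto =
  fixes n :: nat and \<phi> \<psi> :: "(nat \<Rightarrow> 'r::comm_ring_1) \<Rightarrow> (nat \<Rightarrow> 'r)"
  assumes maps_Rn: "\<phi> v \<in> Rn n"
    and inv_maps_Rn: "\<psi> v \<in> Rn n"
    and additive: "\<phi> (\<lambda>i. a i + b i) = (\<lambda>i. \<phi> a i + \<phi> b i)"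
    and homogeneous: "\<phi> (\<lambda>i. c * a i) = (\<lambda>i. c * \<phi> a i)"
    and lincomb_commute: "\<phi> (lincomb cs vs) = lincomb cs (map \<phi> vs)"
    and right_inverse: "v \<in> Rn n \<Longrightarrow> \<phi> (\<psi> v) = v"
    and left_inverse: "v \<in> Rn n \<Longrightarrow> \<psi> (\<phi> v) = v"
begin

lemma zvec: "\<phi> zvec = zvec"
  using homogeneous[of 0 zvec] by (simp add: zvec_def)

lemma inj_on_Rn: "inj_on \<phi> (Rn n)"
  by (metis inj_onI left_inverse)

lemma image_subset_Rn: "\<phi> ` V \<subseteq> Rn n"
  using maps_Rn by blast

lemma inv_image_image: "V \<subseteq> Rn n \<Longrightarrow> \<psi> ` \<phi> ` V = V"
  by (force simp: image_image left_inverse)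

lemma image_image_inv: "V \<subseteq> Rn n \<Longrightarrow> \<phi> ` \<psi> ` V = V"
  by (force simp: image_image right_inverse)

lemma image_eq_iff: "V \<subseteq> Rn n \<Longrightarrow> W \<subseteq> Rn n \<Longrightarrow> \<phi> ` V = \<phi> ` W \<longleftrightarrow> V = W"
  by (metis inv_image_image)

lemma image_Rn: "\<phi> ` Rn n = Rn n"
  using image_subset_Rn image_image_inv[of "Rn n"] inv_maps_Rn by blast

lemma submod_image: "submod n V \<Longrightarrow> submod n (\<phi> ` V)"
  unfolding submod_def
proof (elim conjE, intro conjI ballI allI)
  assume V: "zvec \<in> V" "\<forall>x\<in>V. \<forall>y\<in>V. (\<lambda>i. x i + y i) \<in> V" "\<forall>c. \<forall>x\<in>V. (\<lambda>i. c * x i) \<in> V"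
  show "\<phi> ` V \<subseteq> Rn n" by (rule image_subset_Rn)
  show "zvec \<in> \<phi> ` V" using V(1) by (metis image_eqI zvec)
  show "(\<lambda>i. x i + y i) \<in> \<phi> ` V" if "x \<in> \<phi> ` V" "y \<in> \<phi> ` V" for x y
    using that V(2) by (auto simp flip: additive)
  show "(\<lambda>i. c * x i) \<in> \<phi> ` V" if "x \<in> \<phi> ` V" for c x
    using that V(3) by (auto simp flip: homogeneous)
qed

lemma direct_summand_image: "direct_summand n V \<Longrightarrow> direct_summand n (\<phi> ` V)"
proof -
  assume "direct_summand n V"
  then obtain W where V: "submod n V" and W: "submod n W" "V \<inter> W = {zvec}"
    and decomp: "\<forall>x\<in>Rn n. \<exists>v\<in>V. \<exists>w\<in>W. x = (\<lambda>i. v i + w i)"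
    unfolding direct_summand_def by blast
  have "V \<subseteq> Rn n" "W \<subseteq> Rn n" using V W(1) by (auto simp: submod_def)
  then have "\<phi> ` V \<inter> \<phi> ` W = \<phi> ` (V \<inter> W)"
    by (simp add: inj_on_image_Int[OF inj_on_Rn])
  then have "\<phi> ` V \<inter> \<phi> ` W = {zvec}" by (simp add: W(2) zvec)
  moreover have "\<exists>v\<in>\<phi> ` V. \<exists>w\<in>\<phi> ` W. x = (\<lambda>i. v i + w i)" if x: "x \<in> Rn n" for x
  proof -
    obtain v w where "v \<in> V" "w \<in> W" "\<psi> x = (\<lambda>i. v i + w i)" using decomp inv_maps_Rn by blast
    moreover have "x = \<phi> (\<psi> x)" using x by (simp add: right_inverse)
    ultimately show ?thesis by (auto simp: additive)
  qed
  ultimately show ?thesis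
    unfolding direct_summand_def using submod_image V W(1) by blast
qed

lemma free_mod_image:
  assumes "V \<subseteq> Rn n" "free_mod V"
  shows "free_mod (\<phi> ` V)"
proof -
  obtain vs where vs: "set vs \<subseteq> V" "span_R vs = V" "lin_indep vs"
    using assms(2) unfolding free_mod_def by blast
  have "span_R (map \<phi> vs) = \<phi> ` span_R vs"
    unfolding span_R_def lincomb_commute[symmetric] by auto
  moreover have "lin_indep (map \<phi> vs)"
    unfolding lin_indep_def
  proof (intro allI impI)
    fix cs assume cs: "length cs = length (map \<phi> vs) \<and> lincomb cs (map \<phi> vs) = zvec"
    have "lincomb cs vs \<in> Rn n" using vs(1) assms(1) by (intro lincomb_in_Rn) auto
    moreover have "zvec \<in> Rn n" by (simp add: zvec_def Rn_def)
    moreover have "\<phi> (lincomb cs vs) = \<phi> zvec" using cs by (simp add: lincomb_commute zvec)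
    ultimately have "lincomb cs vs = zvec" using inj_on_Rn by (auto dest: inj_onD)
    then show "\<forall>c\<in>set cs. c = 0" using cs vs(3) unfolding lin_indep_def by auto
  qed
  ultimately show ?thesis
    unfolding free_mod_def using vs by (intro exI[of _ "map \<phi> vs"]) auto
qed

lemma quot_free_image:
  assumes "V \<subseteq> Rn n" "quot_free n V"
  shows "quot_free n (\<phi> ` V)"
proof -
  obtain ws where ws: "set ws \<subseteq> Rn n"
     "\<forall>v\<in>Rn n. \<exists>cs. length cs = length ws \<and> (\<lambda>i. v i - lincomb cs ws i) \<in> V"
     "\<forall>cs. length cs = length ws \<and> lincomb cs ws \<in> V \<longrightarrow> (\<forall>c\<in>set cs. c = 0)"
    using assms(2) unfolding quot_free_def by blast
  have "\<exists>cs. length cs = length ws \<and> (\<lambda>i. v i - lincomb cs (map \<phi> ws) i) \<in> \<phi> ` V"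
    if v: "v \<in> Rn n" for v
  proof -
    obtain cs where cs: "length cs = length ws" "(\<lambda>i. \<psi> v i - lincomb cs ws i) \<in> V"
      using ws(2) inv_maps_Rn by blast
    have "\<phi> (\<lambda>i. \<psi> v i + (- 1) * lincomb cs ws i) = (\<lambda>i. \<phi> (\<psi> v) i + (- 1) * \<phi> (lincomb cs ws) i)"
      by (simp only: additive homogeneous)
    also have "\<dots> = (\<lambda>i. v i - lincomb cs (map \<phi> ws) i)"
      using v by (simp add: right_inverse lincomb_commute)
    finally have "\<phi> (\<lambda>i. \<psi> v i - lincomb cs ws i) = (\<lambda>i. v i - lincomb cs (map \<phi> ws) i)"
      by simp
    with cs show ?thesis by (metis image_eqI)
  qed
  moreover have "\<forall>c\<in>set cs. c = 0"
    if cs: "length cs = length ws" "lincomb cs (map \<phi> ws) \<in> \<phi> ` V" for cs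
  proof -
    obtain a where "a \<in> V" "\<phi> (lincomb cs ws) = \<phi> a"
      using cs(2) unfolding lincomb_commute[symmetric] by blast
    moreover have "lincomb cs ws \<in> Rn n" using ws(1) by (rule lincomb_in_Rn)
    ultimately have "lincomb cs ws \<in> V"
      using assms(1) inj_onD[OF inj_on_Rn] by blast
    then show ?thesis using ws(3) cs(1) by blast
  qed
  moreover have "set (map \<phi> ws) \<subseteq> Rn n" using maps_Rn by auto
  ultimately show ?thesis
    unfolding quot_free_def by (intro exI[of _ "map \<phi> ws"] conjI ballI allI impI) auto
qed

lemma image_neq_zvec: "V \<subseteq> Rn n \<Longrightarrow> V \<noteq> {zvec} \<Longrightarrow> \<phi> ` V \<noteq> {zvec}"
proof
  assume "V \<subseteq> Rn n" "V \<noteq> {zvec}" "\<phi> ` V = {zvec}"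
  moreover have "{zvec} \<subseteq> Rn n" by (simp add: zvec_def Rn_def)
  ultimately show False using image_eq_iff[of V "{zvec}"] by (simp add: zvec)
qed

lemma image_neq_Rn: "V \<subseteq> Rn n \<Longrightarrow> V \<noteq> Rn n \<Longrightarrow> \<phi> ` V \<noteq> Rn n"
  using image_eq_iff[of V "Rn n"] by (simp add: image_Rn)

lemma tits_vertex_image: "tits_vertex n V \<Longrightarrow> tits_vertex n (\<phi> ` V)"
proof -
  assume V: "tits_vertex n V"
  then have R: "V \<subseteq> Rn n" by (simp add: tits_vertex_def direct_summand_def submod_def)
  show ?thesis
    using V direct_summand_image free_mod_image[OF R] quot_free_image[OF R]
      image_neq_zvec[OF R] image_neq_Rn[OF R]
    unfolding tits_vertex_def by blast
qed

lemma is_flag_image: "is_flag n F \<Longrightarrow> is_flag n (map ((`) \<phi>) F)"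
proof -
  assume F: "is_flag n F"
  have R: "V \<subseteq> Rn n" if "V \<in> set F" for V
    using F that by (simp add: is_flag_def direct_summand_def submod_def)
  have "sorted_wrt (\<lambda>V W. \<phi> ` V \<subset> \<phi> ` W) F"
  proof (rule sorted_wrt_mono_rel[of F "(\<subset>)"])
    fix V W assume "V \<in> set F" "W \<in> set F" "V \<subset> W"
    then have "\<phi> ` V \<subseteq> \<phi> ` W" "\<phi> ` V \<noteq> \<phi> ` W"
      using R image_eq_iff[of V W] by auto
    then show "\<phi> ` V \<subset> \<phi> ` W" by blast
  qed (use F in \<open>simp add: is_flag_def\<close>)
  moreover have "direct_summand n (\<phi> ` V) \<and> free_mod (\<phi> ` V) \<and> \<phi> ` V \<noteq> {zvec} \<and> \<phi> ` V \<noteq> Rn n"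
    if "V \<in> set F" for V
    using F that direct_summand_image free_mod_image[OF R[OF that]] image_neq_zvec[OF R[OF that]]
      image_neq_Rn[OF R[OF that]]
    unfolding is_flag_def by blast
  ultimately show ?thesis unfolding is_flag_def by (simp add: sorted_wrt_map)
qed

lemma tits_simplex_image: "tits_simplex n \<sigma> \<Longrightarrow> tits_simplex n (map ((`) \<phi>) \<sigma>)"
proof (cases "\<sigma> = []")
  case False
  assume "tits_simplex n \<sigma>"
  with False have "good_flag n \<sigma>" and V: "\<forall>V\<in>set \<sigma>. tits_vertex n V"
    by (auto simp: tits_simplex_def)
  then obtain G where G: "complete_flag n G" "set \<sigma> \<subseteq> set G" "is_flag n \<sigma>"
    unfolding good_flag_def by blast
  have "complete_flag n (map ((`) \<phi>) G)"
    using G(1) is_flag_image by (simp add: complete_flag_def)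
  moreover have "set (map ((`) \<phi>) \<sigma>) \<subseteq> set (map ((`) \<phi>) G)"
    using G(2) by auto
  ultimately have "good_flag n (map ((`) \<phi>) \<sigma>)"
    using is_flag_image[OF G(3)] unfolding good_flag_def by blast
  then show ?thesis using V tits_vertex_image by (auto simp: tits_simplex_def)
qed (simp add: tits_simplex_def)

end

context linear_auto
begin

lemma all_in_Rn_map_image: "all_in_Rn n (map ((`) \<phi>) \<sigma>)"
  unfolding all_in_Rn_def using image_subset_Rn by auto

lemma map_inv_image_map_image: "all_in_Rn n \<sigma> \<Longrightarrow> map ((`) \<psi>) (map ((`) \<phi>) \<sigma>) = \<sigma>"
  unfolding all_in_Rn_def by (induction \<sigma>) (auto simp: inv_image_image)

lemma map_image_map_inv_image: "all_in_Rn n \<tau> \<Longrightarrow> map ((`) \<phi>) (map ((`) \<psi>) \<tau>) = \<tau>"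
  unfolding all_in_Rn_def by (induction \<tau>) (auto simp: image_image_inv)

lemma map_image_eq_iff:
  "all_in_Rn n \<sigma> \<Longrightarrow> map ((`) \<phi>) \<sigma> = \<tau> \<longleftrightarrow> \<sigma> = map ((`) \<psi>) \<tau> \<and> all_in_Rn n \<tau>"
  using map_inv_image_map_image map_image_map_inv_image all_in_Rn_map_image by metis

lemma map_image_inj:
  "all_in_Rn n \<sigma> \<Longrightarrow> all_in_Rn n \<sigma>' \<Longrightarrow> map ((`) \<phi>) \<sigma> = map ((`) \<phi>) \<sigma>' \<Longrightarrow> \<sigma> = \<sigma>'"
  using map_image_eq_iff by metis

context
  fixes c :: "(nat \<Rightarrow> 'r) set list \<Rightarrow> 'k::field" and m :: nat
  assumes c: "c \<in> chains n m"
begin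

lemma push_chain_apply: "all_in_Rn n \<sigma> \<Longrightarrow> push_chain (map ((`) \<phi>)) c (map ((`) \<phi>) \<sigma>) = c \<sigma>"
proof -
  assume \<sigma>: "all_in_Rn n \<sigma>"
  have "{\<sigma>'. c \<sigma>' \<noteq> 0 \<and> map ((`) \<phi>) \<sigma>' = map ((`) \<phi>) \<sigma>} = (if c \<sigma> \<noteq> 0 then {\<sigma>} else {})"
    using map_image_inj[OF all_in_Rn_chain_support[OF c] \<sigma>] by auto
  then show ?thesis unfolding push_chain_def by simp
qed

lemma push_chain_support: "{\<tau>. push_chain (map ((`) \<phi>)) c \<tau> \<noteq> 0} = map ((`) \<phi>) ` {\<sigma>. c \<sigma> \<noteq> 0}"
  using push_chain_support_subset push_chain_apply all_in_Rn_chain_support[OF c]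
  by (fastforce intro!: equalityI)

lemma sum_push_chain_support:
  "(\<Sum>\<tau> | push_chain (map ((`) \<phi>)) c \<tau> \<noteq> 0. F \<tau> (push_chain (map ((`) \<phi>)) c \<tau>)) =
     (\<Sum>\<sigma> | c \<sigma> \<noteq> 0. F (map ((`) \<phi>) \<sigma>) (c \<sigma>))"
proof -
  have "inj_on (map ((`) \<phi>)) {\<sigma>. c \<sigma> \<noteq> 0}"
    using map_image_inj all_in_Rn_chain_support[OF c] by (auto simp: inj_on_def)
  then have "(\<Sum>\<tau> \<in> map ((`) \<phi>) ` {\<sigma>. c \<sigma> \<noteq> 0}. F \<tau> (push_chain (map ((`) \<phi>)) c \<tau>)) =
      (\<Sum>\<sigma> | c \<sigma> \<noteq> 0. F (map ((`) \<phi>) \<sigma>) (push_chain (map ((`) \<phi>)) c (map ((`) \<phi>) \<sigma>)))"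
    by (rule sum.reindex_cong) (rule refl)+
  also have "\<dots> = (\<Sum>\<sigma> | c \<sigma> \<noteq> 0. F (map ((`) \<phi>) \<sigma>) (c \<sigma>))"
    using push_chain_apply all_in_Rn_chain_support[OF c] by (intro sum.cong) auto
  finally show ?thesis by (simp only: push_chain_support)
qed

lemma bdry_push_chain:
  "bdry (push_chain (map ((`) \<phi>)) c) \<tau> = (if all_in_Rn n \<tau> then bdry c (map ((`) \<psi>) \<tau>) else 0)"
proof -
  have "bdry (push_chain (map ((`) \<phi>)) c) \<tau> = (\<Sum>\<sigma> | c \<sigma> \<noteq> 0.
       \<Sum>i | i < length (map ((`) \<phi>) \<sigma>) \<and> del_nth i (map ((`) \<phi>) \<sigma>) = \<tau>. (- 1) ^ i * c \<sigma>)"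
    unfolding bdry_def by (rule sum_push_chain_support)
  also have "\<dots> = (\<Sum>\<sigma> | c \<sigma> \<noteq> 0.
       \<Sum>i | i < length \<sigma> \<and> del_nth i \<sigma> = map ((`) \<psi>) \<tau> \<and> all_in_Rn n \<tau>. (- 1) ^ i * c \<sigma>)"
  proof (rule sum.cong[OF refl])
    fix \<sigma> assume "\<sigma> \<in> {\<sigma>. c \<sigma> \<noteq> 0}"
    then have "del_nth i (map ((`) \<phi>) \<sigma>) = \<tau> \<longleftrightarrow> del_nth i \<sigma> = map ((`) \<psi>) \<tau> \<and> all_in_Rn n \<tau>" for i
      unfolding del_nth_map
      by (intro map_image_eq_iff all_in_Rn_del_nth all_in_Rn_chain_support[OF c]) simp
    then have "{i. i < length (map ((`) \<phi>) \<sigma>) \<and> del_nth i (map ((`) \<phi>) \<sigma>) = \<tau>} =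
        {i. i < length \<sigma> \<and> del_nth i \<sigma> = map ((`) \<psi>) \<tau> \<and> all_in_Rn n \<tau>}"
      by simp
    then show "(\<Sum>i | i < length (map ((`) \<phi>) \<sigma>) \<and> del_nth i (map ((`) \<phi>) \<sigma>) = \<tau>. (- 1) ^ i * c \<sigma>) =
        (\<Sum>i | i < length \<sigma> \<and> del_nth i \<sigma> = map ((`) \<psi>) \<tau> \<and> all_in_Rn n \<tau>. (- 1) ^ i * c \<sigma>)"
      by (simp only:)
  qed
  also have "\<dots> = (if all_in_Rn n \<tau> then bdry c (map ((`) \<psi>) \<tau>) else 0)"
    by (cases "all_in_Rn n \<tau>") (simp_all add: bdry_def)
  finally show ?thesis .
qed

lemma push_chain_chains: "push_chain (map ((`) \<phi>)) c \<in> chains n m"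
proof -
  have "finite {\<tau>. push_chain (map ((`) \<phi>)) c \<tau> \<noteq> 0}"
    using finite_chain_support[OF c] by (simp add: push_chain_support)
  moreover have "tits_simplex n \<tau> \<and> length \<tau> = m" if "push_chain (map ((`) \<phi>)) c \<tau> \<noteq> 0" for \<tau>
  proof -
    have "\<tau> \<in> map ((`) \<phi>) ` {\<sigma>. c \<sigma> \<noteq> 0}"
      using that by (simp flip: push_chain_support)
    then obtain \<sigma> where "c \<sigma> \<noteq> 0" "\<tau> = map ((`) \<phi>) \<sigma>" by blast
    moreover have "tits_simplex n \<sigma> \<and> length \<sigma> = m" if "c \<sigma> \<noteq> 0" for \<sigma>
      using c that by (simp add: chains_def)
    ultimately show ?thesis using tits_simplex_image by simp
  qed
  ultimately show ?thesis unfolding chains_def by blast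
qed

lemma push_chain_cycles: "c \<in> cycles n m \<Longrightarrow> push_chain (map ((`) \<phi>)) c \<in> cycles n m"
proof -
  assume "c \<in> cycles n m"
  then have "bdry (push_chain (map ((`) \<phi>)) c) \<tau> = 0" for \<tau>
    by (simp add: cycles_def bdry_push_chain)
  then show ?thesis using push_chain_chains by (simp add: cycles_def fun_eq_iff)
qed

end

end

lemma mat_act_add: "mat_act n g (\<lambda>i. a i + b i) = (\<lambda>i. mat_act n g a i + mat_act n g b i)"
  by (auto simp: mat_act_def fun_eq_iff distrib_left sum.distrib)

lemma mat_act_smult: "mat_act n g (\<lambda>i. c * a i) = (\<lambda>i. c * mat_act n g a i)"
  by (auto simp: mat_act_def fun_eq_iff sum_distrib_left mult.left_commute)

lemma mat_act_lincomb: "mat_act n g (lincomb cs vs) = lincomb cs (map (mat_act n g) vs)"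
proof
  fix i
  show "mat_act n g (lincomb cs vs) i = lincomb cs (map (mat_act n g) vs) i"
  proof (cases "i < n")
    case True
    have "mat_act n g (lincomb cs vs) i = (\<Sum>k<n. \<Sum>j<length vs. cs ! j * (g i k * (vs ! j) k))"
      using True by (simp add: mat_act_def lincomb_def sum_distrib_left mult.left_commute)
    also have "\<dots> = (\<Sum>j<length vs. cs ! j * mat_act n g (vs ! j) i)"
      using True by (subst sum.swap) (simp add: mat_act_def sum_distrib_left)
    finally show ?thesis by (simp add: lincomb_def)
  next
    case False
    then show ?thesis by (simp add: mat_act_def lincomb_def)
  qed
qed

lemma mat_act_inverse:
  assumes gh: "\<forall>i<n. \<forall>j<n. (\<Sum>l<n. g i l * h l j) = (if i = j then 1 else 0)" and v: "v \<in> Rn n"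
  shows "mat_act n g (mat_act n h v) = v"
proof
  fix i
  show "mat_act n g (mat_act n h v) i = v i"
  proof (cases "i < n")
    case True
    have "mat_act n g (mat_act n h v) i = (\<Sum>j<n. \<Sum>l<n. g i j * h j l * v l)"
      using True by (simp add: mat_act_def sum_distrib_left mult.assoc)
    also have "\<dots> = (\<Sum>l<n. (\<Sum>j<n. g i j * h j l) * v l)"
      by (subst sum.swap) (simp add: sum_distrib_right)
    also have "\<dots> = (\<Sum>l<n. if i = l then v l else 0)"
      using gh True by (intro sum.cong) auto
    also have "\<dots> = v i" using True by simp
    finally show ?thesis .
  next
    case False
    then show ?thesis using v by (simp add: mat_act_def Rn_def)
  qed
qed

lemma linear_auto_mat_act:
  assumes "in_GL n g"
  obtains h where "linear_auto n (mat_act n g) (mat_act n h)"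
proof -
  obtain h where gh: "\<forall>i<n. \<forall>j<n. (\<Sum>l<n. g i l * h l j) = (if i = j then 1 else 0)"
    "\<forall>i<n. \<forall>j<n. (\<Sum>l<n. h i l * g l j) = (if i = j then 1 else 0)"
    using assms unfolding in_GL_def by blast
  have "linear_auto n (mat_act n g) (mat_act n h)"
  proof
    show "mat_act n g v \<in> Rn n" "mat_act n h v \<in> Rn n" for v
      by (simp_all add: mat_act_def Rn_def)
  qed (simp_all add: mat_act_add mat_act_smult mat_act_lincomb mat_act_inverse gh)
  then show ?thesis by (rule that)
qed

section \<open>Reduction modulo a non-unit\<close>

text \<open>The submodule V + xR^n; flags are compared modulo x through it.\<close>
definition mod_reduce :: "'r::comm_ring_1 \<Rightarrow> nat \<Rightarrow> (nat \<Rightarrow> 'r) set \<Rightarrow> (nat \<Rightarrow> 'r) set" where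
  "mod_reduce x n V = {w. \<exists>v\<in>V. \<exists>u\<in>Rn n. w = (\<lambda>i. v i + x * u i)}"

lemma (in linear_auto) image_mod_reduce: "\<phi> ` mod_reduce x n V = mod_reduce x n (\<phi> ` V)"
proof
  show "\<phi> ` mod_reduce x n V \<subseteq> mod_reduce x n (\<phi> ` V)"
  proof
    fix w assume "w \<in> \<phi> ` mod_reduce x n V"
    then obtain v u where "v \<in> V" "w = \<phi> (\<lambda>i. v i + x * u i)"
      unfolding mod_reduce_def by blast
    then show "w \<in> mod_reduce x n (\<phi> ` V)"
      unfolding mod_reduce_def mem_Collect_eq
      by (intro bexI[of _ "\<phi> v"] bexI[of _ "\<phi> u"]) (simp_all add: additive homogeneous maps_Rn)
  qed
  show "mod_reduce x n (\<phi> ` V) \<subseteq> \<phi> ` mod_reduce x n V"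
  proof
    fix w assume "w \<in> mod_reduce x n (\<phi> ` V)"
    then obtain v u where vu: "v \<in> V" "u \<in> Rn n" "w = (\<lambda>i. \<phi> v i + x * u i)"
      unfolding mod_reduce_def by blast
    then have "w = \<phi> (\<lambda>i. v i + x * \<psi> u i)"
      by (simp add: additive homogeneous right_inverse)
    moreover have "(\<lambda>i. v i + x * \<psi> u i) \<in> mod_reduce x n V"
      unfolding mod_reduce_def using vu inv_maps_Rn by blast
    ultimately show "w \<in> \<phi> ` mod_reduce x n V" by blast
  qed
qed

lemma mod_reduce_image_eq:
  assumes \<phi>: "\<And>v. v \<in> V \<Longrightarrow> \<phi> v = (\<lambda>i. v i + x * u v i)" and u: "\<And>v. v \<in> V \<Longrightarrow> u v \<in> Rn n"
  shows "mod_reduce x n (\<phi> ` V) = mod_reduce x n V"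
proof
  show "mod_reduce x n (\<phi> ` V) \<subseteq> mod_reduce x n V"
  proof
    fix w assume "w \<in> mod_reduce x n (\<phi> ` V)"
    then obtain v u' where vu: "v \<in> V" "u' \<in> Rn n" "w = (\<lambda>i. \<phi> v i + x * u' i)"
      unfolding mod_reduce_def by blast
    then have "w = (\<lambda>i. v i + x * (u v i + u' i))" using \<phi> by (simp add: algebra_simps)
    moreover have "(\<lambda>i. u v i + u' i) \<in> Rn n" using u[OF vu(1)] vu(2) by (simp add: Rn_def)
    ultimately show "w \<in> mod_reduce x n V"
      unfolding mod_reduce_def mem_Collect_eq
      by (intro bexI[of _ v] bexI[of _ "\<lambda>i. u v i + u' i"]) (use vu(1) in auto)
  qed
  show "mod_reduce x n V \<subseteq> mod_reduce x n (\<phi> ` V)"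
  proof
    fix w assume "w \<in> mod_reduce x n V"
    then obtain v u' where vu: "v \<in> V" "u' \<in> Rn n" "w = (\<lambda>i. v i + x * u' i)"
      unfolding mod_reduce_def by blast
    then have "w = (\<lambda>i. \<phi> v i + x * (u' i - u v i))" using \<phi> by (simp add: algebra_simps)
    moreover have "(\<lambda>i. u' i - u v i) \<in> Rn n" using u[OF vu(1)] vu(2) by (simp add: Rn_def)
    ultimately show "w \<in> mod_reduce x n (\<phi> ` V)"
      unfolding mod_reduce_def mem_Collect_eq
      by (intro bexI[of _ "\<phi> v"] bexI[of _ "\<lambda>i. u' i - u v i"]) (use vu(1) in auto)
  qed
qed

lemma mod_reduce_coord_submod_subset:
  fixes x :: "'r::comm_ring_1"
  assumes "\<not> x dvd 1" "A \<subseteq> {..<n}" "mod_reduce x n (coord_submod n A) = mod_reduce x n (coord_submod n B)"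
  shows "A \<subseteq> B"
proof
  fix j assume j: "j \<in> A"
  have "(unit_vec j :: nat \<Rightarrow> 'r) \<in> coord_submod n A"
    using j assms(2) by (intro unit_vec_in_coord_submod) auto
  then have "(unit_vec j :: nat \<Rightarrow> 'r) \<in> mod_reduce x n (coord_submod n A)"
    unfolding mod_reduce_def mem_Collect_eq
    by (intro bexI[of _ "unit_vec j"] bexI[of _ zvec]) (simp_all add: zvec_def Rn_def)
  then have "(unit_vec j :: nat \<Rightarrow> 'r) \<in> mod_reduce x n (coord_submod n B)"
    by (simp only: assms(3))
  then obtain v u where v: "v \<in> coord_submod n B" and e: "unit_vec j = (\<lambda>i. v i + x * u i)"
    unfolding mod_reduce_def by blast
  show "j \<in> B"
  proof (rule ccontr)
    assume "j \<notin> B"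
    then have "v j = 0" using v by (simp add: coord_submod_def)
    then have "1 = x * u j" using fun_cong[OF e, of j] by (simp add: unit_vec_def)
    then show False using assms(1) dvdI by blast
  qed
qed

lemma permutes_eq_id_if_fixes_atMost:
  fixes p :: "nat \<Rightarrow> nat"
  assumes p: "p permutes {..<n}" and segments: "\<And>k. k < n - 1 \<Longrightarrow> p ` {..k} = {..k}"
  shows "p = id"
proof
  have atMost: "p ` {..k} = {..k}" if "k < n" for k
  proof (cases "k < n - 1")
    case False
    with that have "{..k} = {..<n}" by auto
    then show ?thesis using permutes_image[OF p] by simp
  qed (rule segments)
  have lessThan: "p ` {..<k} = {..<k}" if "k < n" for k
    using that atMost by (cases k) (auto simp: lessThan_Suc_atMost)
  fix k
  show "p k = id k"
  proof (cases "k < n")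
    case True
    have "p ` ({..k} - {..<k}) = {..k} - {..<k}"
      using atMost[OF True] lessThan[OF True] image_set_diff[OF permutes_inj[OF p]] by simp
    moreover have "{..k} - {..<k} = {k}" by auto
    ultimately show ?thesis by simp
  qed (simp add: permutes_not_in[OF p])
qed

lemma perm_flag_mod_reduce_eq_id:
  fixes x :: "'r::comm_ring_1"
  assumes "\<not> x dvd 1" and p: "p permutes {..<n}"
    and "map (mod_reduce x n) (perm_flag n p) = map (mod_reduce x n) (perm_flag n id :: (nat \<Rightarrow> 'r) set list)"
  shows "p = id"
proof (rule permutes_eq_id_if_fixes_atMost[OF p])
  fix k assume k: "k < n - 1"
  then have e: "mod_reduce x n (coord_submod n (p ` {..k})) = mod_reduce x n (coord_submod n {..k} :: (nat \<Rightarrow> 'r) set)"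
    using arg_cong[OF assms(3), of "\<lambda>l. l ! k"] by (simp add: perm_flag_nth)
  have "p ` {..k} \<subseteq> {..<n}" "{..k} \<subseteq> {..<n}"
    using k permutes_image_atMost_subset[OF p, of k] by auto
  then show "p ` {..k} = {..k}"
    using mod_reduce_coord_submod_subset[OF assms(1) _ e] mod_reduce_coord_submod_subset[OF assms(1) _ e[symmetric]]
    by blast
qed

lemma apartment_chain_perm_flag_id:
  assumes "(1::'r::comm_ring_1) \<noteq> 0"
  shows "(apartment_chain n (perm_flag n id :: (nat \<Rightarrow> 'r) set list) :: 'k::field) = 1"
proof -
  have "p = id" if "p permutes {..<n}" "(perm_flag n p :: (nat \<Rightarrow> 'r) set list) = perm_flag n id" for p
  proof (rule perm_flag_mod_reduce_eq_id[where x = "0 :: 'r" and n = n])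
    show "\<not> (0 :: 'r) dvd 1" using assms by simp
  qed (use that in simp_all)
  then have "{p. p permutes {..<n} \<and> (perm_flag n p :: (nat \<Rightarrow> 'r) set list) = perm_flag n id} = {id}"
    by (auto simp: permutes_id)
  then show ?thesis by (simp add: apartment_chain_def)
qed

section \<open>Transvections\<close>

text \<open>The elementary matrix I + x e_10, which is the identity modulo x.\<close>
definition transvection :: "'r::comm_ring_1 \<Rightarrow> nat \<Rightarrow> nat \<Rightarrow> 'r" where
  "transvection x i j = (if i = j then 1 else 0) + (if i = 1 \<and> j = 0 then x else 0)"

lemma transvection_mult:
  assumes "1 < n" "i < n"
  shows "(\<Sum>l<n. transvection s i l * transvection t l j) = transvection (s + t) i j"
proof -
  have "(\<Sum>l<n. transvection s i l * transvection t l j) =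
      (\<Sum>l<n. (if l = i then transvection t l j else 0) + (if l = 0 then (if i = 1 then s * transvection t l j else 0) else 0))"
    by (intro sum.cong refl) (auto simp: transvection_def[of s] distrib_right)
  also have "\<dots> = transvection t i j + (if i = 1 then s * transvection t 0 j else 0)"
    using assms by (simp add: sum.distrib)
  also have "\<dots> = transvection (s + t) i j" by (auto simp: transvection_def algebra_simps)
  finally show ?thesis .
qed

lemma in_GL_transvection: "1 < n \<Longrightarrow> in_GL n (transvection x)"
  unfolding in_GL_def
  by (intro exI[of _ "transvection (- x)"]) (simp add: transvection_mult, simp add: transvection_def)

lemma mat_act_transvection:
  assumes "1 < n" "v \<in> Rn n"
  shows "mat_act n (transvection x) v = (\<lambda>i. v i + x * (if i = 1 then v 0 else 0))"
proof
  fix i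
  show "mat_act n (transvection x) v i = v i + x * (if i = 1 then v 0 else 0)"
  proof (cases "i < n")
    case True
    have "(\<Sum>j<n. transvection x i j * v j) =
        (\<Sum>j<n. (if j = i then v j else 0) + (if j = 0 then (if i = 1 then x * v j else 0) else 0))"
      by (intro sum.cong refl) (auto simp: transvection_def distrib_right)
    then show ?thesis using True assms(1) by (simp add: mat_act_def sum.distrib)
  next
    case False
    then show ?thesis using assms by (simp add: mat_act_def Rn_def)
  qed
qed

lemma mod_reduce_image_transvection:
  assumes "1 < n" "V \<subseteq> Rn n"
  shows "mod_reduce x n (mat_act n (transvection x) ` V) = mod_reduce x n V"
proof (rule mod_reduce_image_eq[where u = "\<lambda>v i. if i = 1 then v 0 else 0"])
  fix v assume "v \<in> V"
  then show "mat_act n (transvection x) v = (\<lambda>i. v i + x * (if i = 1 then v 0 else 0))"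
    using assms mat_act_transvection by blast
  show "(\<lambda>i. if i = 1 then v 0 else 0) \<in> Rn n" using assms(1) by (simp add: Rn_def)
qed

text \<open>The transvection moves the line spanned by the first unit vector off every coordinate line.\<close>
lemma transvection_image_ne_perm_flag:
  fixes x :: "'r::comm_ring_1"
  assumes n: "1 < n" and x: "x \<noteq> 0"
  shows "map ((`) (mat_act n (transvection x))) (perm_flag n id) \<noteq> (perm_flag n p :: (nat \<Rightarrow> 'r) set list)"
proof
  let ?w = "mat_act n (transvection x) (unit_vec 0) :: nat \<Rightarrow> 'r"
  assume "map ((`) (mat_act n (transvection x))) (perm_flag n id) = (perm_flag n p :: (nat \<Rightarrow> 'r) set list)"
  then have "map ((`) (mat_act n (transvection x))) (perm_flag n id) ! 0 = (perm_flag n p :: (nat \<Rightarrow> 'r) set list) ! 0"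
    by simp
  then have "mat_act n (transvection x) ` coord_submod n {0} = (coord_submod n {p 0} :: (nat \<Rightarrow> 'r) set)"
    using n by (simp add: perm_flag_nth)
  moreover have "(unit_vec 0 :: nat \<Rightarrow> 'r) \<in> coord_submod n {0}"
    using n by (intro unit_vec_in_coord_submod) auto
  ultimately have w: "?w \<in> coord_submod n {p 0}" by blast
  have "?w = (\<lambda>i. unit_vec 0 i + x * (if i = 1 then unit_vec 0 0 else 0))"
    using n by (intro mat_act_transvection unit_vec_in_Rn) auto
  then have w01: "?w 0 = 1" "?w 1 = x" by (simp_all add: unit_vec_def)
  show False
  proof (cases "p 0 = 0")
    case True
    then show False using w w01(2) x by (simp add: coord_submod_def)
  next
    case False
    then have "(1::'r) = 0" using w w01(1) by (simp add: coord_submod_def)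
    then show False using x by (metis mult_1 mult_zero_left)
  qed
qed

section \<open>The reduction kernel\<close>

text \<open>The kernel of the reduction map St_n(R) \<rightarrow> St_n(R/x), on the level of cycles.\<close>
definition reduction_kernel :: "'r::comm_ring_1 \<Rightarrow> nat \<Rightarrow> ((nat \<Rightarrow> 'r) set list \<Rightarrow> 'k::field) set" where
  "reduction_kernel x n = {z \<in> cycles n (n - 1). push_chain (map (mod_reduce x n)) z = (\<lambda>\<rho>. 0)}"

lemma zero_in_reduction_kernel: "(\<lambda>\<sigma>. 0) \<in> reduction_kernel x n"
  by (simp add: reduction_kernel_def zero_in_cycles push_chain_zero)

lemma GL_stable_reduction_kernel:
  "GL_stable_subspace n (reduction_kernel x n :: ((nat \<Rightarrow> 'r::comm_ring_1) set list \<Rightarrow> 'k::field) set)"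
  unfolding GL_stable_subspace_def
proof (intro conjI ballI allI impI)
  fix a b :: "(nat \<Rightarrow> 'r) set list \<Rightarrow> 'k" and c :: 'k
  assume a: "a \<in> reduction_kernel x n" and b: "b \<in> reduction_kernel x n"
  then have fin: "finite {\<sigma>. a \<sigma> \<noteq> 0}" "finite {\<sigma>. b \<sigma> \<noteq> 0}"
    by (auto simp: reduction_kernel_def cycles_def chains_def)
  show "(\<lambda>\<sigma>. a \<sigma> + b \<sigma>) \<in> reduction_kernel x n"
    using a b by (simp add: reduction_kernel_def cycles_add push_chain_add[OF fin] fun_eq_iff)
  show "(\<lambda>\<sigma>. c * a \<sigma>) \<in> reduction_kernel x n"
    using a by (simp add: reduction_kernel_def cycles_smult push_chain_smult[OF fin(1)] fun_eq_iff)
next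
  fix g :: "nat \<Rightarrow> nat \<Rightarrow> 'r" and a assume g: "in_GL n g" and a: "a \<in> reduction_kernel x n"
  obtain h where "linear_auto n (mat_act n g) (mat_act n h)" using linear_auto_mat_act[OF g] .
  then interpret linear_auto n "mat_act n g" "mat_act n h" .
  let ?red = "map (mod_reduce x n)" and ?act = "map ((`) (mat_act n g))"
  have Z: "a \<in> cycles n (n - 1)" and red: "push_chain ?red a = (\<lambda>\<rho>. 0)"
    using a by (auto simp: reduction_kernel_def)
  have fin: "finite {\<sigma>. a \<sigma> \<noteq> 0}" using Z by (simp add: cycles_def chains_def)
  have "?red \<circ> ?act = ?act \<circ> ?red" by (simp add: fun_eq_iff image_mod_reduce)
  then have "push_chain ?red (push_chain ?act a) = push_chain ?act (push_chain ?red a)"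
    using fin finite_subset[OF push_chain_support_subset finite_imageI[OF fin]]
    by (simp add: push_chain_comp)
  then show "chain_act n g a \<in> reduction_kernel x n"
    using Z push_chain_cycles[of a "n - 1"] red
    by (simp add: reduction_kernel_def chain_act_eq_push_chain push_chain_zero cycles_def)
qed

lemma diff_push_transvection_in_reduction_kernel:
  fixes x :: "'r::comm_ring_1"
  assumes n: "1 < n" and z: "z \<in> cycles n (n - 1)"
  shows "(\<lambda>\<sigma>. z \<sigma> - push_chain (map ((`) (mat_act n (transvection x)))) z \<sigma>) \<in> (reduction_kernel x n :: ((nat \<Rightarrow> 'r) set list \<Rightarrow> 'k::field) set)"
proof -
  obtain h where "linear_auto n (mat_act n (transvection x)) (mat_act n h)"
    using linear_auto_mat_act[OF in_GL_transvection[OF n]] .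
  then interpret linear_auto n "mat_act n (transvection x)" "mat_act n h" .
  let ?red = "map (mod_reduce x n)" and ?act = "map ((`) (mat_act n (transvection x)))"
  have zc: "z \<in> chains n (n - 1)" using z by (simp add: cycles_def)
  then have fin: "finite {\<sigma>. z \<sigma> \<noteq> 0}" "finite {\<sigma>. push_chain ?act z \<sigma> \<noteq> 0}"
    using push_chain_chains[OF zc] by (simp_all add: chains_def)
  have "push_chain ?red (push_chain ?act z) = push_chain (?red \<circ> ?act) z"
    by (rule push_chain_comp[OF fin(1)])
  also have "\<dots> = push_chain ?red z"
  proof (rule push_chain_cong)
    fix \<sigma> assume "z \<sigma> \<noteq> 0"
    then have "all_in_Rn n \<sigma>" by (rule all_in_Rn_chain_support[OF zc])
    then show "(?red \<circ> ?act) \<sigma> = ?red \<sigma>"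
      by (simp add: all_in_Rn_def mod_reduce_image_transvection[OF n])
  qed
  finally show ?thesis
    using cycles_diff[OF z push_chain_cycles[OF zc z]]
    by (simp add: reduction_kernel_def push_chain_diff[OF fin] fun_eq_iff)
qed

lemma push_transvection_apartment_chain_ne:
  fixes x :: "'r::comm_ring_1"
  assumes n: "1 < n" and x: "x \<noteq> 0"
  shows "push_chain (map ((`) (mat_act n (transvection x)))) (apartment_chain n) \<noteq>
    (apartment_chain n :: (nat \<Rightarrow> 'r) set list \<Rightarrow> 'k::field)"
proof
  obtain h where "linear_auto n (mat_act n (transvection x)) (mat_act n h)"
    using linear_auto_mat_act[OF in_GL_transvection[OF n]] .
  then interpret linear_auto n "mat_act n (transvection x)" "mat_act n h" .
  let ?z = "apartment_chain n :: (nat \<Rightarrow> 'r) set list \<Rightarrow> 'k"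
  let ?\<tau> = "map ((`) (mat_act n (transvection x))) (perm_flag n id :: (nat \<Rightarrow> 'r) set list)"
  have one: "(1::'r) \<noteq> 0" using x by (metis mult_1 mult_zero_left)
  have zc: "?z \<in> chains n (n - 1)"
    using apartment_chain_cycle[where 'k = 'k, OF one] by (simp add: cycles_def)
  have "push_chain (map ((`) (mat_act n (transvection x)))) ?z ?\<tau> = 1"
    using push_chain_apply[OF zc all_in_Rn_tits_simplex[OF tits_simplex_perm_flag[OF one permutes_id]]]
      apartment_chain_perm_flag_id[where 'k = 'k, OF one] by simp
  moreover have empty: "{p. p permutes {..<n} \<and> perm_flag n p = ?\<tau>} = {}"
    using transvection_image_ne_perm_flag[OF n x] by (metis (mono_tags, lifting) empty_Collect_eq)
  have "?z ?\<tau> = 0" unfolding apartment_chain_def by (simp only: empty sum.empty)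
  moreover assume "push_chain (map ((`) (mat_act n (transvection x)))) ?z = ?z"
  ultimately show False by simp
qed

lemma reduction_kernel_ne_cycles:
  fixes x :: "'r::comm_ring_1"
  assumes x: "\<not> x dvd 1"
  shows "(reduction_kernel x n :: ((nat \<Rightarrow> 'r) set list \<Rightarrow> 'k::field) set) \<noteq> cycles n (n - 1)"
proof
  let ?z = "apartment_chain n :: (nat \<Rightarrow> 'r) set list \<Rightarrow> 'k"
  let ?\<sigma> = "perm_flag n id :: (nat \<Rightarrow> 'r) set list"
  have one: "(1::'r) \<noteq> 0" using x by auto
  have "\<sigma> = ?\<sigma>" if "?z \<sigma> \<noteq> 0" "map (mod_reduce x n) \<sigma> = map (mod_reduce x n) ?\<sigma>" for \<sigma>
    using that apartment_chain_support perm_flag_mod_reduce_eq_id[OF x] by blast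
  then have "{\<sigma>. ?z \<sigma> \<noteq> 0 \<and> map (mod_reduce x n) \<sigma> = map (mod_reduce x n) ?\<sigma>} = {?\<sigma>}"
    using apartment_chain_perm_flag_id[where 'k = 'k, OF one] by auto
  then have "push_chain (map (mod_reduce x n)) ?z (map (mod_reduce x n) ?\<sigma>) = 1"
    using apartment_chain_perm_flag_id[where 'k = 'k, OF one] by (simp add: push_chain_def)
  moreover assume "(reduction_kernel x n :: ((nat \<Rightarrow> 'r) set list \<Rightarrow> 'k) set) = cycles n (n - 1)"
  then have "?z \<in> reduction_kernel x n" using apartment_chain_cycle[where 'k = 'k, OF one] by simp
  ultimately show False by (simp add: reduction_kernel_def)
qed

lemma reduction_kernel_ne_zero:
  fixes x :: "'r::comm_ring_1"
  assumes n: "1 < n" and x: "x \<noteq> 0"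
  shows "(reduction_kernel x n :: ((nat \<Rightarrow> 'r) set list \<Rightarrow> 'k::field) set) \<noteq> {\<lambda>\<sigma>. 0}"
proof
  let ?z = "apartment_chain n :: (nat \<Rightarrow> 'r) set list \<Rightarrow> 'k"
  let ?Tz = "push_chain (map ((`) (mat_act n (transvection x)))) ?z"
  have "(1::'r) \<noteq> 0" using x by (metis mult_1 mult_zero_left)
  then have "(\<lambda>\<sigma>. ?z \<sigma> - ?Tz \<sigma>) \<in> reduction_kernel x n"
    using n by (intro diff_push_transvection_in_reduction_kernel apartment_chain_cycle)
  moreover assume "reduction_kernel x n = {\<lambda>\<sigma>. 0 :: 'k}"
  ultimately have "?Tz = ?z" by (simp add: fun_eq_iff)
  with push_transvection_apartment_chain_ne[where 'k = 'k, OF n x] show False by simp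
qed

theorem mainTheorem19:
  fixes n :: nat
  assumes "\<exists>x::'r::comm_ring_1. x \<noteq> 0 \<and> \<not> x dvd 1"
    and "n \<ge> 2"
  shows "\<not> St_irreducible TYPE('r) TYPE('k::field) n"
proof
  obtain x :: 'r where x: "x \<noteq> 0" "\<not> x dvd 1" using assms(1) by blast
  let ?Z = "cycles n (n - 1) :: ((nat \<Rightarrow> 'r) set list \<Rightarrow> 'k) set"
  let ?B = "boundaries n (n - 1) :: ((nat \<Rightarrow> 'r) set list \<Rightarrow> 'k) set"
  let ?W = "reduction_kernel x n :: ((nat \<Rightarrow> 'r) set list \<Rightarrow> 'k) set"
  have B: "?B = {\<lambda>\<sigma>. 0}" using assms(2) by (intro boundaries_top) simp
  assume "St_irreducible TYPE('r) TYPE('k) n"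
  moreover have "?B \<subseteq> ?W" "?W \<subseteq> ?Z"
    using B zero_in_reduction_kernel by (auto simp: reduction_kernel_def)
  ultimately have "?W = ?B \<or> ?W = ?Z"
    unfolding St_irreducible_def Let_def using GL_stable_reduction_kernel by blast
  moreover have "?W \<noteq> ?B" using reduction_kernel_ne_zero[of n x] assms(2) x(1) unfolding B by simp
  moreover have "?W \<noteq> ?Z" using reduction_kernel_ne_cycles[OF x(2)] .
  ultimately show False by blast
qed

end
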